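(* Let $P:\mathcal{C}^{\mathrm{op}}\to\mathbf{Pos}$ be a slat-doctrine whose fibres have finite joins. Then its universal completion $P^{un}$ satisfies the counterexample property: for all objects $A,B$ of $\mathcal{C}$ and every $\alpha\in P(A\times B)$, if $(A,B,\alpha)\le(A,1,\bot_{A\times 1})$ in $P^{un}(A)$ (i.e. "$a{:}A\mid\forall b{:}B\,\alpha(a,b)\vdash\bot$"), then there exists an arrow $g:A\to B$ of $\mathcal{C}$ such that $P_{\langle 1_A,g\rangle}(\alpha)\le\bot_A$ in $P(A)$ (i.e. "$a{:}A\mid\alpha(a,g(a))\vdash\bot$").
   Context: A slat-doctrine is a functor $P:\mathcal{C}^{\mathrm{op}}\to\mathbf{Pos}$ with $\mathcal{C}$ having finite products; $P_f:P(Y)\to P(X)$ is reindexing along $f:X\to Y$; $\bot_X$ denotes the least element of $P(X)$. Universal completion: $P^{un}(A)$ is the poset (reflection of the preorder) of triples $(A,B,\alpha)$ with $\alpha\in P(A\times B)$, where $(A,B,\alpha)\le(A,C,\beta)$ iff there is an arrow $g:A\times C\to B$ with $P_{\langle\mathrm{pr}_A,g\rangle}(\alpha)\le\beta$; the triple $(A,B,\alpha)$ represents the formula $\forall b{:}B\,\alpha(a,b)$ (it is the universal quantification along $\mathrm{pr}_A:A\times B\to A$ of the image of $\alpha$ in $P^{un}(A\times B)$), and $(A,1,\bot_{A\times 1})$ represents $\bot$ in $P^{un}(A)$. *)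

theory Defs
  imports Main
begin

text \<open>A category with (chosen) finite products, presented by objects, arrows
  with domain/codomain, composition (cmp g f = g after f), identities, a terminal
  object with unique arrows into it, and binary products with projections and
  pairing satisfying the universal property.\<close>

record ('o, 'a) fp_cat =
  Ob   :: "'o set"
  Ar   :: "'a set"
  dom  :: "'a \<Rightarrow> 'o"
  cod  :: "'a \<Rightarrow> 'o"
  cmp  :: "'a \<Rightarrow> 'a \<Rightarrow> 'a"
  idt  :: "'o \<Rightarrow> 'a"
  one  :: "'o"
  bang :: "'o \<Rightarrow> 'a"
  prd  :: "'o \<Rightarrow> 'o \<Rightarrow> 'o"
  pr1  :: "'o \<Rightarrow> 'o \<Rightarrow> 'a"
  pr2  :: "'o \<Rightarrow> 'o \<Rightarrow> 'a"
  pair :: "'a \<Rightarrow> 'a \<Rightarrow> 'a"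

definition Hom :: "('o, 'a, 'c) fp_cat_scheme \<Rightarrow> 'o \<Rightarrow> 'o \<Rightarrow> 'a set" where
  "Hom C X Y = {f \<in> Ar C. dom C f = X \<and> cod C f = Y}"

definition is_fp_cat :: "('o, 'a, 'c) fp_cat_scheme \<Rightarrow> bool" where
  "is_fp_cat C \<longleftrightarrow>
     (\<forall>f \<in> Ar C. dom C f \<in> Ob C \<and> cod C f \<in> Ob C)
   \<and> (\<forall>X \<in> Ob C. idt C X \<in> Hom C X X)
   \<and> (\<forall>X \<in> Ob C. \<forall>Y \<in> Ob C. \<forall>Z \<in> Ob C. \<forall>f \<in> Hom C X Y. \<forall>g \<in> Hom C Y Z.
        cmp C g f \<in> Hom C X Z)
   \<and> (\<forall>W \<in> Ob C. \<forall>X \<in> Ob C. \<forall>Y \<in> Ob C. \<forall>Z \<in> Ob C.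
        \<forall>f \<in> Hom C W X. \<forall>g \<in> Hom C X Y. \<forall>h \<in> Hom C Y Z.
        cmp C h (cmp C g f) = cmp C (cmp C h g) f)
   \<and> (\<forall>X \<in> Ob C. \<forall>Y \<in> Ob C. \<forall>f \<in> Hom C X Y.
        cmp C (idt C Y) f = f \<and> cmp C f (idt C X) = f)
   \<and> one C \<in> Ob C
   \<and> (\<forall>X \<in> Ob C. bang C X \<in> Hom C X (one C) \<and> (\<forall>f \<in> Hom C X (one C). f = bang C X))
   \<and> (\<forall>X \<in> Ob C. \<forall>Y \<in> Ob C.
        prd C X Y \<in> Ob C
      \<and> pr1 C X Y \<in> Hom C (prd C X Y) X
      \<and> pr2 C X Y \<in> Hom C (prd C X Y) Y
      \<and> (\<forall>Z \<in> Ob C. \<forall>f \<in> Hom C Z X. \<forall>g \<in> Hom C Z Y.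
           pair C f g \<in> Hom C Z (prd C X Y)
         \<and> cmp C (pr1 C X Y) (pair C f g) = f
         \<and> cmp C (pr2 C X Y) (pair C f g) = g
         \<and> (\<forall>h \<in> Hom C Z (prd C X Y).
              cmp C (pr1 C X Y) h = f \<and> cmp C (pr2 C X Y) h = g \<longrightarrow> h = pair C f g)))"

text \<open>A doctrine: a functor P : C^op \<rightarrow> Pos. fib X is the carrier of P(X),
  leq X its partial order, reidx f is P_f.\<close>

record ('o, 'a, 'p) doctrine =
  fib   :: "'o \<Rightarrow> 'p set"
  leq   :: "'o \<Rightarrow> 'p \<Rightarrow> 'p \<Rightarrow> bool"
  reidx :: "'a \<Rightarrow> 'p \<Rightarrow> 'p"

definition is_slat_doctrine ::
  "('o, 'a, 'c) fp_cat_scheme \<Rightarrow> ('o, 'a, 'p, 'd) doctrine_scheme \<Rightarrow> bool" where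
  "is_slat_doctrine C P \<longleftrightarrow>
     is_fp_cat C
   \<and> (\<forall>X \<in> Ob C.
        (\<forall>x \<in> fib P X. leq P X x x)
      \<and> (\<forall>x \<in> fib P X. \<forall>y \<in> fib P X. \<forall>z \<in> fib P X.
           leq P X x y \<and> leq P X y z \<longrightarrow> leq P X x z)
      \<and> (\<forall>x \<in> fib P X. \<forall>y \<in> fib P X. leq P X x y \<and> leq P X y x \<longrightarrow> x = y))
   \<and> (\<forall>X \<in> Ob C. \<forall>Y \<in> Ob C. \<forall>f \<in> Hom C X Y.
        (\<forall>y \<in> fib P Y. reidx P f y \<in> fib P X)
      \<and> (\<forall>y \<in> fib P Y. \<forall>y' \<in> fib P Y. leq P Y y y' \<longrightarrow> leq P X (reidx P f y) (reidx P f y')))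
   \<and> (\<forall>X \<in> Ob C. \<forall>x \<in> fib P X. reidx P (idt C X) x = x)
   \<and> (\<forall>X \<in> Ob C. \<forall>Y \<in> Ob C. \<forall>Z \<in> Ob C. \<forall>f \<in> Hom C X Y. \<forall>g \<in> Hom C Y Z.
        \<forall>z \<in> fib P Z. reidx P (cmp C g f) z = reidx P f (reidx P g z))"

definition fibres_have_finite_joins ::
  "('o, 'a, 'c) fp_cat_scheme \<Rightarrow> ('o, 'a, 'p, 'd) doctrine_scheme \<Rightarrow> bool" where
  "fibres_have_finite_joins C P \<longleftrightarrow>
     (\<forall>X \<in> Ob C.
        (\<exists>b \<in> fib P X. \<forall>x \<in> fib P X. leq P X b x)
      \<and> (\<forall>x \<in> fib P X. \<forall>y \<in> fib P X. \<exists>j \<in> fib P X.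
           leq P X x j \<and> leq P X y j
         \<and> (\<forall>z \<in> fib P X. leq P X x z \<and> leq P X y z \<longrightarrow> leq P X j z)))"

definition fbot :: "('o, 'a, 'p, 'd) doctrine_scheme \<Rightarrow> 'o \<Rightarrow> 'p" where
  "fbot P X = (THE b. b \<in> fib P X \<and> (\<forall>x \<in> fib P X. leq P X b x))"

text \<open>The preorder on P^un(A): (A,B,alpha) \<le> (A,C,beta) iff there is
  g : A\<times>C \<rightarrow> B with P_<pr_A,g>(alpha) \<le> beta in P(A\<times>C).\<close>

definition un_le ::
  "('o, 'a, 'c) fp_cat_scheme \<Rightarrow> ('o, 'a, 'p, 'd) doctrine_scheme \<Rightarrow>
     'o \<Rightarrow> 'o \<Rightarrow> 'p \<Rightarrow> 'o \<Rightarrow> 'p \<Rightarrow> bool" where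
  "un_le C P A B \<alpha> D \<beta> \<longleftrightarrow>
     (\<exists>g \<in> Hom C (prd C A D) B.
        leq P (prd C A D) (reidx P (pair C (pr1 C A D) g) \<alpha>) \<beta>)"

end

theory Submission
  imports Defs
begin

(* A witness g : A \<times> 1 \<rightarrow> B for the inequality in the universal completion yields the arrow
  g \<circ> s : A \<rightarrow> B, where s = \<langle>1\<^sub>A, !\<^sub>A\<rangle> : A \<rightarrow> A \<times> 1. Indeed
  \<langle>1\<^sub>A, g \<circ> s\<rangle> = \<langle>pr\<^sub>A, g\<rangle> \<circ> s, and reindexing along s preserves the least element
  because s is a section of pr\<^sub>A: the bottom of P(A \<times> 1) lies below the reindexing
  along pr\<^sub>A of any element of P(A). *)

context
  fixes C :: "('o, 'a, 'c) fp_cat_scheme"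
  assumes fp: "is_fp_cat C"
begin

lemma one_in_Ob: "one C \<in> Ob C"
  using fp by (simp add: is_fp_cat_def)

lemma idt_in_Hom: "X \<in> Ob C \<Longrightarrow> idt C X \<in> Hom C X X"
  using fp by (simp add: is_fp_cat_def)

lemma cmp_in_Hom:
  "\<lbrakk>X \<in> Ob C; Y \<in> Ob C; Z \<in> Ob C; f \<in> Hom C X Y; g \<in> Hom C Y Z\<rbrakk>
    \<Longrightarrow> cmp C g f \<in> Hom C X Z"
  using fp by (simp add: is_fp_cat_def)

lemma cmp_assoc:
  "\<lbrakk>W \<in> Ob C; X \<in> Ob C; Y \<in> Ob C; Z \<in> Ob C;
    f \<in> Hom C W X; g \<in> Hom C X Y; h \<in> Hom C Y Z\<rbrakk>
    \<Longrightarrow> cmp C h (cmp C g f) = cmp C (cmp C h g) f"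
  using fp by (simp add: is_fp_cat_def)

lemma bang_in_Hom: "X \<in> Ob C \<Longrightarrow> bang C X \<in> Hom C X (one C)"
  using fp by (simp add: is_fp_cat_def)

lemma prd_in_Ob: "\<lbrakk>X \<in> Ob C; Y \<in> Ob C\<rbrakk> \<Longrightarrow> prd C X Y \<in> Ob C"
  using fp by (simp add: is_fp_cat_def)

lemma pr1_in_Hom: "\<lbrakk>X \<in> Ob C; Y \<in> Ob C\<rbrakk> \<Longrightarrow> pr1 C X Y \<in> Hom C (prd C X Y) X"
  using fp by (simp add: is_fp_cat_def)

lemma pr2_in_Hom: "\<lbrakk>X \<in> Ob C; Y \<in> Ob C\<rbrakk> \<Longrightarrow> pr2 C X Y \<in> Hom C (prd C X Y) Y"
  using fp by (simp add: is_fp_cat_def)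

context
  fixes X Y Z f g
  assumes obs: "X \<in> Ob C" "Y \<in> Ob C" "Z \<in> Ob C"
    and f: "f \<in> Hom C Z X" and g: "g \<in> Hom C Z Y"
begin

lemma pair_in_Hom: "pair C f g \<in> Hom C Z (prd C X Y)"
  using fp obs f g by (simp add: is_fp_cat_def)

lemma pr1_pair: "cmp C (pr1 C X Y) (pair C f g) = f"
  using fp obs f g by (simp add: is_fp_cat_def)

lemma pr2_pair: "cmp C (pr2 C X Y) (pair C f g) = g"
  using fp obs f g by (simp add: is_fp_cat_def)

lemma pair_unique:
  "\<lbrakk>h \<in> Hom C Z (prd C X Y); cmp C (pr1 C X Y) h = f; cmp C (pr2 C X Y) h = g\<rbrakk>
    \<Longrightarrow> h = pair C f g"
  using fp obs f g by (simp add: is_fp_cat_def)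

end

lemma pair_cmp:
  assumes obs: "W \<in> Ob C" "X \<in> Ob C" "Y \<in> Ob C" "Z \<in> Ob C"
    and f: "f \<in> Hom C Z X" and g: "g \<in> Hom C Z Y" and h: "h \<in> Hom C W Z"
  shows "cmp C (pair C f g) h = pair C (cmp C f h) (cmp C g h)"
proof (rule pair_unique)
  have fg: "pair C f g \<in> Hom C Z (prd C X Y)"
    using pair_in_Hom[OF obs(2-4) f g] .
  show "cmp C (pair C f g) h \<in> Hom C W (prd C X Y)"
    using cmp_in_Hom obs prd_in_Ob h fg by blast
  show "cmp C (pr1 C X Y) (cmp C (pair C f g) h) = cmp C f h"
    using cmp_assoc[OF _ _ prd_in_Ob _ h fg pr1_in_Hom] pr1_pair obs f g by simp
  show "cmp C (pr2 C X Y) (cmp C (pair C f g) h) = cmp C g h"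
    using cmp_assoc[OF _ _ prd_in_Ob _ h fg pr2_in_Hom] pr2_pair obs f g by simp
qed (use obs f g h cmp_in_Hom in auto)

end

context
  fixes C :: "('o, 'a, 'c) fp_cat_scheme" and P :: "('o, 'a, 'p, 'd) doctrine_scheme"
  assumes sl: "is_slat_doctrine C P"
begin

lemma slat_doctrine_fp_cat: "is_fp_cat C"
  using sl unfolding is_slat_doctrine_def by blast

lemma leq_antisym:
  "\<lbrakk>X \<in> Ob C; x \<in> fib P X; y \<in> fib P X; leq P X x y; leq P X y x\<rbrakk> \<Longrightarrow> x = y"
  using sl unfolding is_slat_doctrine_def by blast

lemma reidx_in_fib:
  "\<lbrakk>X \<in> Ob C; Y \<in> Ob C; f \<in> Hom C X Y; y \<in> fib P Y\<rbrakk> \<Longrightarrow> reidx P f y \<in> fib P X"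
  using sl unfolding is_slat_doctrine_def by blast

lemma reidx_mono:
  "\<lbrakk>X \<in> Ob C; Y \<in> Ob C; f \<in> Hom C X Y; y \<in> fib P Y; y' \<in> fib P Y; leq P Y y y'\<rbrakk>
    \<Longrightarrow> leq P X (reidx P f y) (reidx P f y')"
  using sl unfolding is_slat_doctrine_def by blast

lemma reidx_idt: "\<lbrakk>X \<in> Ob C; x \<in> fib P X\<rbrakk> \<Longrightarrow> reidx P (idt C X) x = x"
  using sl unfolding is_slat_doctrine_def by blast

lemma reidx_cmp:
  "\<lbrakk>X \<in> Ob C; Y \<in> Ob C; Z \<in> Ob C; f \<in> Hom C X Y; g \<in> Hom C Y Z; z \<in> fib P Z\<rbrakk>
    \<Longrightarrow> reidx P (cmp C g f) z = reidx P f (reidx P g z)"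
  using sl unfolding is_slat_doctrine_def by blast

lemma fbot_eqI:
  assumes "X \<in> Ob C" "b \<in> fib P X" "\<forall>x \<in> fib P X. leq P X b x"
  shows "fbot P X = b"
  unfolding fbot_def
  by (rule the_equality) (use assms leq_antisym in blast)+

lemma fbot_least:
  assumes "X \<in> Ob C" "\<exists>b \<in> fib P X. \<forall>x \<in> fib P X. leq P X b x"
  shows "fbot P X \<in> fib P X" "\<forall>x \<in> fib P X. leq P X (fbot P X) x"
  using assms fbot_eqI by metis+

lemma reidx_section_fbot:
  assumes X: "X \<in> Ob C" and Y: "Y \<in> Ob C"
    and s: "s \<in> Hom C X Y" and r: "r \<in> Hom C Y X" and rs: "cmp C r s = idt C X"
    and bot: "\<exists>b \<in> fib P Y. \<forall>y \<in> fib P Y. leq P Y b y"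
  shows "reidx P s (fbot P Y) = fbot P X"
proof (rule sym, rule fbot_eqI[OF X])
  note bY = fbot_least[OF Y bot]
  show "reidx P s (fbot P Y) \<in> fib P X"
    using reidx_in_fib X Y s bY(1) .
  show "\<forall>x \<in> fib P X. leq P X (reidx P s (fbot P Y)) x"
  proof
    fix x assume x: "x \<in> fib P X"
    have rx: "reidx P r x \<in> fib P Y"
      using reidx_in_fib Y X r x .
    have "leq P X (reidx P s (fbot P Y)) (reidx P s (reidx P r x))"
      using reidx_mono[OF X Y s bY(1) rx] bY(2) rx by blast
    also have "reidx P s (reidx P r x) = x"
      using reidx_cmp[OF X Y X s r x] rs reidx_idt X x by simp
    finally show "leq P X (reidx P s (fbot P Y)) x" .
  qed
qed

end

lemma fibres_have_finite_joins_bot: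
  "\<lbrakk>fibres_have_finite_joins C P; X \<in> Ob C\<rbrakk>
    \<Longrightarrow> \<exists>b \<in> fib P X. \<forall>x \<in> fib P X. leq P X b x"
  unfolding fibres_have_finite_joins_def by blast

theorem theorem11:
  fixes C :: "('o, 'a) fp_cat" and P :: "('o, 'a, 'p) doctrine"
  assumes "is_slat_doctrine C P"
    and "fibres_have_finite_joins C P"
    and "A \<in> Ob C" and "B \<in> Ob C"
    and "\<alpha> \<in> fib P (prd C A B)"
    and "un_le C P A B \<alpha> (one C) (fbot P (prd C A (one C)))"
  shows "\<exists>g \<in> Hom C A B. leq P A (reidx P (pair C (idt C A) g) \<alpha>) (fbot P A)"
proof -
  note sl = assms(1) and A = assms(3) and B = assms(4) and \<alpha> = assms(5)
  note fp = slat_doctrine_fp_cat[OF sl]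
  define A1 where "A1 = prd C A (one C)"
  define p where "p = pr1 C A (one C)"
  define s where "s = pair C (idt C A) (bang C A)"
  have O: "one C \<in> Ob C" using one_in_Ob[OF fp] .
  have A1: "A1 \<in> Ob C" using prd_in_Ob[OF fp A O] unfolding A1_def .
  have AB: "prd C A B \<in> Ob C" using prd_in_Ob[OF fp A B] .
  have p: "p \<in> Hom C A1 A" using pr1_in_Hom[OF fp A O] unfolding p_def A1_def .
  note idA = idt_in_Hom[OF fp A] and bA = bang_in_Hom[OF fp A]
  have s: "s \<in> Hom C A A1" using pair_in_Hom[OF fp A O A idA bA] unfolding s_def A1_def .
  have ps: "cmp C p s = idt C A" using pr1_pair[OF fp A O A idA bA] unfolding s_def p_def .
  obtain g where g: "g \<in> Hom C A1 B" and le: "leq P A1 (reidx P (pair C p g) \<alpha>) (fbot P A1)"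
    using assms(6) unfolding un_le_def A1_def p_def by blast
  have k: "pair C p g \<in> Hom C A1 (prd C A B)" using pair_in_Hom[OF fp A B A1 p g] .
  have gs: "cmp C g s \<in> Hom C A B" using cmp_in_Hom[OF fp A A1 B s g] .
  have "pair C (idt C A) (cmp C g s) = cmp C (pair C p g) s"
    using pair_cmp[OF fp A A B A1 p g s] ps by simp
  then have "reidx P (pair C (idt C A) (cmp C g s)) \<alpha> = reidx P s (reidx P (pair C p g) \<alpha>)"
    using reidx_cmp[OF sl A A1 AB s k \<alpha>] by simp
  also have "leq P A \<dots> (reidx P s (fbot P A1))"
    using reidx_mono[OF sl A A1 s reidx_in_fib[OF sl A1 AB k \<alpha>]
        fbot_least(1)[OF sl A1 fibres_have_finite_joins_bot[OF assms(2) A1]] le] .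
  also have "reidx P s (fbot P A1) = fbot P A"
    using reidx_section_fbot[OF sl A A1 s p ps fibres_have_finite_joins_bot[OF assms(2) A1]] .
  finally show ?thesis using gs by blast
qed

end
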